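(* Let $(\hat T,\hat\ell)$ be a vine decomposition of a graph $G=(V,E)$, with labels $\hat V_s$. Let $X\subseteq V$ and let $C$ be the vertex set of a connected component of $G-X$. Suppose there is a node $t$ of $\hat T$ such that $\hat V_t\cap C=\emptyset$ and every set separating $X$ from $\hat V_t$ in $G$ has at least $|X|$ vertices. Then there is a vine decomposition $(T,\ell)$ of the induced subgraph $G[X\cup C]$ with the same tree $T=\hat T$ and labels $V_s$ such that: (1) $V_t=X$; (2) $V_s\subseteq\hat V_s$ for every leaf $s\neq t$ of $T$; (3) $|V_s|\le|\hat V_s|$ for every node $s$ of $T$.
   Context: Vine decomposition of a graph $H=(W,F)$: a pair $(T,\ell)$ where $T$ is a tree and $\ell$ assigns to each node $t$ of $T$ a set $V_t\subseteq W$, such that, writing $T_v=\{t: v\in V_t\}$: (i) for each $v\in W$, $T_v$ is nonempty and induces a connected subtree of $T$; (ii) for each edge $uv\in F$, the subtrees $T_u$ and $T_v$ either share a node or some node of $T_u$ is adjacent in $T$ to some node of $T_v$. A set $S\subseteq V$ separates $A$ from $B$ if every path in $G$ (including one-vertex paths) from a vertex of $A$ to a vertex of $B$ contains a vertex of $S$. *)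

theory Defs
  imports Main
begin

definition graph :: "'a set \<Rightarrow> 'a set set \<Rightarrow> bool" where
  "graph V E \<longleftrightarrow> finite V \<and> (\<forall>e\<in>E. \<exists>u v. e = {u, v} \<and> u \<noteq> v \<and> u \<in> V \<and> v \<in> V)"

definition is_path :: "'a set \<Rightarrow> 'a set set \<Rightarrow> 'a list \<Rightarrow> bool" where
  "is_path V E p \<longleftrightarrow> p \<noteq> [] \<and> distinct p \<and> set p \<subseteq> V \<and>
     (\<forall>i. Suc i < length p \<longrightarrow> {p ! i, p ! Suc i} \<in> E)"

definition path_from_to :: "'a set \<Rightarrow> 'a set set \<Rightarrow> 'a \<Rightarrow> 'a \<Rightarrow> 'a list \<Rightarrow> bool" where
  "path_from_to V E u v p \<longleftrightarrow> is_path V E p \<and> hd p = u \<and> last p = v"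

definition induced_edges :: "'a set set \<Rightarrow> 'a set \<Rightarrow> 'a set set" where
  "induced_edges E W = {e \<in> E. e \<subseteq> W}"

definition connected_in :: "'a set \<Rightarrow> 'a set set \<Rightarrow> 'a set \<Rightarrow> bool" where
  "connected_in V E W \<longleftrightarrow> W \<subseteq> V \<and>
     (\<forall>u\<in>W. \<forall>v\<in>W. \<exists>p. path_from_to W (induced_edges E W) u v p)"

definition component :: "'a set \<Rightarrow> 'a set set \<Rightarrow> 'a set \<Rightarrow> bool" where
  "component V E C \<longleftrightarrow> C \<noteq> {} \<and> connected_in V E C \<and>
     (\<forall>D. C \<subseteq> D \<and> connected_in V E D \<longrightarrow> D = C)"

definition separates :: "'a set \<Rightarrow> 'a set set \<Rightarrow> 'a set \<Rightarrow> 'a set \<Rightarrow> 'a set \<Rightarrow> bool" where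
  "separates V E S A B \<longleftrightarrow> S \<subseteq> V \<and>
     (\<forall>a\<in>A. \<forall>b\<in>B. \<forall>p. path_from_to V E a b p \<longrightarrow> set p \<inter> S \<noteq> {})"

definition tree :: "'b set \<Rightarrow> 'b set set \<Rightarrow> bool" where
  "tree N ET \<longleftrightarrow> graph N ET \<and> N \<noteq> {} \<and>
     (\<forall>u\<in>N. \<forall>v\<in>N. \<exists>!p. path_from_to N ET u v p)"

definition degree :: "'b set set \<Rightarrow> 'b \<Rightarrow> nat" where
  "degree ET s = card {e \<in> ET. s \<in> e}"

definition leaf :: "'b set \<Rightarrow> 'b set set \<Rightarrow> 'b \<Rightarrow> bool" where
  "leaf N ET s \<longleftrightarrow> s \<in> N \<and> degree ET s = 1"

definition nodes_of :: "'b set \<Rightarrow> ('b \<Rightarrow> 'a set) \<Rightarrow> 'a \<Rightarrow> 'b set" where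
  "nodes_of N l v = {t \<in> N. v \<in> l t}"

definition vine_decomposition ::
  "'a set \<Rightarrow> 'a set set \<Rightarrow> 'b set \<Rightarrow> 'b set set \<Rightarrow> ('b \<Rightarrow> 'a set) \<Rightarrow> bool" where
  "vine_decomposition W F N ET l \<longleftrightarrow> tree N ET \<and>
     (\<forall>t\<in>N. l t \<subseteq> W) \<and>
     (\<forall>v\<in>W. nodes_of N l v \<noteq> {} \<and> connected_in N ET (nodes_of N l v)) \<and>
     (\<forall>u v. {u, v} \<in> F \<longrightarrow>
        (\<exists>s\<in>nodes_of N l u. \<exists>s'\<in>nodes_of N l v. s = s' \<or> {s, s'} \<in> ET))"

end

theory Submission
  imports Defs
begin

text \<open>
  By Menger's theorem there are \<open>|X|\<close> disjoint paths \<open>P x\<close>, one starting at each \<open>x \<in> X\<close>,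
  ending in the bag of \<open>t\<close> and meeting \<open>X\<close> only in their first vertex; such a path cannot
  enter \<open>C\<close> without ending in \<open>C\<close>, so it avoids \<open>C\<close>. The new bag at a node \<open>s\<close> keeps the
  part of the old bag inside \<open>C\<close>, and contains \<open>x \<in> X\<close> whenever \<open>s\<close> lies on the tree path
  from a node of the old subtree \<open>T\<^sub>x\<close> to \<open>t\<close>. The new subtree of \<open>x\<close> is a union of paths
  ending at \<open>t\<close>, hence connected, and it contains \<open>T\<^sub>x\<close>, so every edge stays covered.
  The old subtrees of the vertices of \<open>P x\<close> form a connected set containing \<open>T\<^sub>x\<close> and \<open>t\<close>,
  hence the whole new subtree of \<open>x\<close>: if \<open>x\<close> is in the new bag at \<open>s\<close>, then \<open>P x\<close> meets
  the old bag at \<open>s\<close> outside \<open>C\<close>, and disjointness of the paths bounds the size of the new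
  bag. A leaf \<open>s \<noteq> t\<close> lies on a tree path ending at \<open>t\<close> only as its first node, so its new
  bag lies inside the old one.
\<close>

section \<open>Paths and walks\<close>

abbreviation adjacent :: "'a set set \<Rightarrow> 'a \<Rightarrow> 'a \<Rightarrow> bool" where
  "adjacent E a b \<equiv> {a, b} \<in> E"

lemma graph_finite_edges:
  assumes "graph V E"
  shows "finite E"
proof (rule finite_subset)
  show "E \<subseteq> Pow V" using assms unfolding graph_def by force
  show "finite (Pow V)" using assms unfolding graph_def by simp
qed

lemma split_list_two:
  assumes "x \<in> set p" "y \<in> set p" "x \<noteq> y"
  shows "\<exists>u w ys ms zs. {u, w} = {x, y} \<and> p = ys @ u # ms @ w # zs"
proof -
  obtain ys zs where p: "p = ys @ x # zs" using split_list[OF assms(1)] by blast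
  then consider "y \<in> set ys" | "y \<in> set zs" using assms(2,3) by auto
  then show ?thesis
  proof cases
    case 1
    then obtain ys1 ys2 where "ys = ys1 @ y # ys2" using split_list by metis
    then show ?thesis using p by (intro exI[of _ y] exI[of _ x]) auto
  next
    case 2
    then obtain zs1 zs2 where "zs = zs1 @ y # zs2" using split_list by metis
    then show ?thesis using p by (intro exI[of _ x] exI[of _ y]) auto
  qed
qed

lemma is_path_iff_successively:
  "is_path V E p \<longleftrightarrow> p \<noteq> [] \<and> distinct p \<and> set p \<subseteq> V \<and> successively (adjacent E) p"
  unfolding is_path_def successively_conv_nth by auto

lemma path_from_to_ends: "path_from_to V E a b p \<Longrightarrow> a \<in> set p \<and> b \<in> set p"
  unfolding path_from_to_def is_path_iff_successively by auto

lemma successively_append_tl: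
  assumes "successively R p" "successively R q" "last p = hd q" "p \<noteq> []"
  shows "successively R (p @ tl q)"
  using assms by (cases q; cases "tl q") (auto simp: successively_append_iff)

lemma walk_to_path:
  assumes "p \<noteq> []" "successively R p"
  shows "\<exists>q. q \<noteq> [] \<and> distinct q \<and> set q \<subseteq> set p \<and> successively R q \<and> hd q = hd p \<and> last q = last p"
  using assms
proof (induction "length p" arbitrary: p rule: less_induct)
  case less
  show ?case
  proof (cases "distinct p")
    case False
    then obtain xs ys zs y where p: "p = xs @ [y] @ ys @ [y] @ zs"
      using not_distinct_decomp by blast
    let ?q = "xs @ [y] @ zs"
    have "successively R (xs @ [y])" "successively R (y # zs)"
      using less.prems(2) unfolding p
      using successively_append_iff[of R "xs @ [y]" "ys @ [y] @ zs"]
        successively_append_iff[of R "xs @ [y] @ ys" "[y] @ zs"] by simp_all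
    then have "successively R ?q"
      using successively_append_tl[of R "xs @ [y]" "y # zs"] by simp
    moreover have "hd ?q = hd p" "last ?q = last p"
      unfolding p by (cases xs; simp) (cases zs rule: rev_cases; simp)
    moreover have "length ?q < length p" "set ?q \<subseteq> set p" unfolding p by auto
    ultimately show ?thesis using less.hyps[of ?q] by fastforce
  qed (use less.prems in blast)
qed

lemma is_path_rev: "is_path V E p \<Longrightarrow> is_path V E (rev p)"
  unfolding is_path_iff_successively by (auto simp: insert_commute)

lemma path_from_to_rev: "path_from_to V E a b p \<Longrightarrow> path_from_to V E b a (rev p)"
  unfolding path_from_to_def using is_path_rev
  by (metis hd_rev is_path_def last_rev rev_is_Nil_conv)

lemma is_path_mono: "is_path V E p \<Longrightarrow> V \<subseteq> V' \<Longrightarrow> E \<subseteq> E' \<Longrightarrow> is_path V' E' p"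
  unfolding is_path_iff_successively by (auto elim: successively_mono)

lemma is_path_remove_edge:
  assumes "is_path V E p" "x \<notin> set p \<or> y \<notin> set p"
  shows "is_path V (E - {{x, y}}) p"
proof -
  have "successively (adjacent (E - {{x, y}})) p"
  proof (rule successively_mono)
    show "successively (adjacent E) p" using assms(1) unfolding is_path_iff_successively by blast
  next
    fix a b assume "a \<in> set p" "b \<in> set p" "adjacent E a b"
    moreover have "{a, b} \<noteq> {x, y}" using calculation assms(2) by (metis doubleton_eq_iff)
    ultimately show "adjacent (E - {{x, y}}) a b" by blast
  qed
  then show ?thesis using assms(1) unfolding is_path_iff_successively by blast
qed

lemma is_path_appendD:
  assumes "is_path V E (xs @ ys)"
  shows "xs \<noteq> [] \<Longrightarrow> is_path V E xs" and "ys \<noteq> [] \<Longrightarrow> is_path V E ys"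
  using assms successively_append_iff[of "adjacent E" xs ys]
  unfolding is_path_iff_successively by auto

lemma path_from_to_prefix:
  "is_path V E p \<Longrightarrow> p = ys @ v # zs \<Longrightarrow> path_from_to V E (hd p) v (ys @ [v])"
  using is_path_appendD(1)[of V E "ys @ [v]" zs]
  unfolding path_from_to_def by (cases ys) auto

lemma path_from_to_suffix:
  "is_path V E p \<Longrightarrow> p = ys @ v # zs \<Longrightarrow> path_from_to V E v (last p) (v # zs)"
  using is_path_appendD(2)[of V E ys "v # zs"] unfolding path_from_to_def by auto

lemma path_from_to_append_tl:
  assumes "path_from_to V E a b p" "path_from_to V E b c q" "set p \<inter> set q \<subseteq> {b}"
  shows "path_from_to V E a c (p @ tl q)"
proof -
  have "q \<noteq> []" "distinct q" "hd q = b" using assms(2) unfolding path_from_to_def is_path_def by auto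
  then have "b \<notin> set (tl q)" by (cases q) auto
  then have "set p \<inter> set (tl q) = {}" using assms(3) list.set_sel(2)[OF \<open>q \<noteq> []\<close>] by blast
  then have "distinct (p @ tl q)" "set (p @ tl q) \<subseteq> V"
    using assms list.set_sel(2)[of q] unfolding path_from_to_def is_path_iff_successively
    by (auto simp: distinct_tl)
  moreover have "successively (adjacent E) (p @ tl q)"
    using assms successively_append_tl unfolding path_from_to_def is_path_iff_successively by metis
  moreover have "last (p @ tl q) = c"
    using assms(1,2) unfolding path_from_to_def is_path_iff_successively
    by (cases q; cases "tl q") (auto simp: last_tl)
  ultimately show ?thesis using assms(1) unfolding path_from_to_def is_path_iff_successively by auto
qed

lemma path_truncate:
  assumes "is_path V E p" "last p \<in> B"
  shows "\<exists>p'. is_path V E p' \<and> hd p' = hd p \<and> last p' \<in> B \<and> set p' \<subseteq> set p \<and>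
    set (butlast p') \<inter> B = {}"
proof -
  have "\<exists>v\<in>set p. v \<in> B" using assms unfolding is_path_def by auto
  then obtain ys v zs where p: "p = ys @ v # zs" "v \<in> B" "\<forall>y\<in>set ys. y \<notin> B"
    by (rule split_list_first_propE)
  then show ?thesis
    using path_from_to_prefix[OF assms(1) p(1)] unfolding path_from_to_def
    by (intro exI[of _ "ys @ [v]"]) auto
qed

section \<open>Connectivity through walks\<close>

definition reachable_in :: "'a set \<Rightarrow> 'a set set \<Rightarrow> 'a \<Rightarrow> 'a \<Rightarrow> bool" where
  "reachable_in W F u v \<longleftrightarrow>
     (\<exists>p. p \<noteq> [] \<and> set p \<subseteq> W \<and> successively (adjacent F) p \<and> hd p = u \<and> last p = v)"

lemma reachable_in_refl: "u \<in> W \<Longrightarrow> reachable_in W F u u"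
  unfolding reachable_in_def by (intro exI[of _ "[u]"]) auto

lemma reachable_in_edge: "u \<in> W \<Longrightarrow> v \<in> W \<Longrightarrow> {u, v} \<in> F \<Longrightarrow> reachable_in W F u v"
  unfolding reachable_in_def by (intro exI[of _ "[u, v]"]) auto

lemma reachable_in_mono: "reachable_in W F u v \<Longrightarrow> W \<subseteq> W' \<Longrightarrow> reachable_in W' F u v"
  unfolding reachable_in_def by blast

lemma reachable_in_sym: "reachable_in W F u v \<Longrightarrow> reachable_in W F v u"
proof -
  assume "reachable_in W F u v"
  then obtain p where "p \<noteq> []" "set p \<subseteq> W" "successively (adjacent F) p" "hd p = u" "last p = v"
    unfolding reachable_in_def by blast
  then show ?thesis unfolding reachable_in_def
    by (intro exI[of _ "rev p"]) (auto simp: hd_rev last_rev insert_commute)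
qed

lemma reachable_in_trans:
  assumes "reachable_in W F u v" "reachable_in W F v w"
  shows "reachable_in W F u w"
proof -
  obtain p where p: "p \<noteq> []" "set p \<subseteq> W" "successively (adjacent F) p" "hd p = u" "last p = v"
    using assms(1) unfolding reachable_in_def by blast
  obtain q where q: "q \<noteq> []" "set q \<subseteq> W" "successively (adjacent F) q" "hd q = v" "last q = w"
    using assms(2) unfolding reachable_in_def by blast
  have "successively (adjacent F) (p @ tl q)" using successively_append_tl[OF p(3) q(3)] p q by simp
  moreover have "set (p @ tl q) \<subseteq> W" using p q by (cases q) auto
  moreover have "hd (p @ tl q) = u" "last (p @ tl q) = w"
    using p q by (auto simp: last_tl) (cases q; cases "tl q"; auto)
  ultimately show ?thesis unfolding reachable_in_def using p(1) by blast
qed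

lemma reachable_in_walk:
  assumes "p \<noteq> []" "successively (adjacent F) p" "v \<in> set p"
  shows "reachable_in (set p) F (hd p) v"
proof -
  obtain ys zs where p: "p = ys @ v # zs" using split_list[OF assms(3)] by blast
  have "successively (adjacent F) (ys @ [v])"
    using assms(2) successively_append_iff[of "adjacent F" "ys @ [v]" zs] unfolding p by simp
  moreover have "hd (ys @ [v]) = hd p" unfolding p by (cases ys) simp_all
  moreover have "set (ys @ [v]) \<subseteq> set p" unfolding p by auto
  ultimately show ?thesis unfolding reachable_in_def by (intro exI[of _ "ys @ [v]"]) simp
qed

lemma reachable_in_path:
  assumes "reachable_in W F u v" "W \<subseteq> V"
  shows "\<exists>p. path_from_to V F u v p \<and> set p \<subseteq> W"
proof -
  obtain w where w: "w \<noteq> []" "set w \<subseteq> W" "successively (adjacent F) w" "hd w = u" "last w = v"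
    using assms(1) unfolding reachable_in_def by blast
  obtain p where "p \<noteq> []" "distinct p" "set p \<subseteq> set w" "successively (adjacent F) p"
    "hd p = u" "last p = v"
    using walk_to_path[OF w(1,3)] w(4,5) by metis
  then show ?thesis using w(2) assms(2) unfolding path_from_to_def is_path_iff_successively by blast
qed

lemma reachable_in_path_from_to: "path_from_to V E a b p \<Longrightarrow> reachable_in (set p) E a b"
  using reachable_in_walk[of p E "last p"] unfolding path_from_to_def is_path_iff_successively by auto

lemma path_from_to_trans:
  assumes "path_from_to V E a b p" "path_from_to V E b c q"
  shows "\<exists>r. path_from_to V E a c r \<and> set r \<subseteq> set p \<union> set q"
proof -
  have "reachable_in (set p \<union> set q) E a b" "reachable_in (set p \<union> set q) E b c"
    using reachable_in_path_from_to[OF assms(1)] reachable_in_path_from_to[OF assms(2)]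
    by (auto intro: reachable_in_mono)
  moreover have "set p \<union> set q \<subseteq> V" using assms unfolding path_from_to_def is_path_def by auto
  ultimately show ?thesis using reachable_in_path reachable_in_trans by metis
qed

lemma induced_path_iff_reachable_in:
  "(\<exists>p. path_from_to W (induced_edges F W) u v p) \<longleftrightarrow> reachable_in W F u v"
proof
  assume "\<exists>p. path_from_to W (induced_edges F W) u v p"
  then obtain p where "path_from_to W (induced_edges F W) u v p" ..
  then have p: "p \<noteq> []" "set p \<subseteq> W" "successively (adjacent (induced_edges F W)) p"
    "hd p = u" "last p = v"
    unfolding path_from_to_def is_path_iff_successively by auto
  have "successively (adjacent F) p"
    by (rule successively_mono[OF p(3)]) (simp add: induced_edges_def)
  with p show "reachable_in W F u v" unfolding reachable_in_def by (intro exI[of _ p]) simp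
next
  assume "reachable_in W F u v"
  then obtain p where p: "p \<noteq> []" "set p \<subseteq> W" "successively (adjacent F) p" "hd p = u" "last p = v"
    unfolding reachable_in_def by blast
  have "successively (adjacent (induced_edges F W)) p"
    by (rule successively_mono[OF p(3)]) (use p(2) in \<open>auto simp: induced_edges_def\<close>)
  with p have "reachable_in W (induced_edges F W) u v"
    unfolding reachable_in_def by (intro exI[of _ p]) simp
  from reachable_in_path[OF this subset_refl] show "\<exists>p. path_from_to W (induced_edges F W) u v p"
    by (elim exE conjE) (rule exI)
qed

lemma connected_in_iff_reachable_in:
  "connected_in V F W \<longleftrightarrow> W \<subseteq> V \<and> (\<forall>u\<in>W. \<forall>v\<in>W. reachable_in W F u v)"
  unfolding connected_in_def induced_path_iff_reachable_in ..

lemma connected_in_from_center: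
  assumes "W \<subseteq> V" "c \<in> W" "\<And>v. v \<in> W \<Longrightarrow> reachable_in W F c v"
  shows "connected_in V F W"
  unfolding connected_in_iff_reachable_in
  using assms(1) reachable_in_trans[OF reachable_in_sym[OF assms(3)] assms(3)] by blast

lemma component_reachable_closed:
  assumes C: "component V F C" and "c \<in> C" "reachable_in V F c v"
  shows "v \<in> C"
proof -
  obtain w where w: "w \<noteq> []" "set w \<subseteq> V" "successively (adjacent F) w" "hd w = c" "last w = v"
    using assms(3) unfolding reachable_in_def by blast
  have C_conn: "C \<subseteq> V" "\<forall>u\<in>C. \<forall>u'\<in>C. reachable_in C F u u'"
    using C unfolding component_def connected_in_iff_reachable_in by auto
  have "reachable_in (C \<union> set w) F c u" if u: "u \<in> C \<union> set w" for u
  proof (cases "u \<in> C")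
    case True
    show ?thesis by (rule reachable_in_mono[OF C_conn(2)[rule_format, OF \<open>c \<in> C\<close> True]]) blast
  next
    case False
    then have "reachable_in (set w) F c u" using reachable_in_walk[OF w(1,3), of u] u w(4) by simp
    then show ?thesis by (rule reachable_in_mono) blast
  qed
  moreover have "C \<union> set w \<subseteq> V" using C_conn(1) w(2) by blast
  ultimately have "connected_in V F (C \<union> set w)"
    using connected_in_from_center[of "C \<union> set w" V c F] \<open>c \<in> C\<close> by simp
  moreover have "\<forall>D. C \<subseteq> D \<and> connected_in V F D \<longrightarrow> D = C" using C unfolding component_def by simp
  ultimately have "C \<union> set w = C" by simp
  then show ?thesis using w(1,5) last_in_set by blast
qed

lemma path_avoids_component:
  assumes C: "component (V - X) (induced_edges E (V - X)) C"
    and p: "is_path V E p" "hd p \<in> X" "set (tl p) \<inter> X = {}" "last p \<notin> C"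
  shows "set p \<inter> C = {}"
proof (rule ccontr)
  assume "set p \<inter> C \<noteq> {}"
  then obtain c where c: "c \<in> set p" "c \<in> C" by blast
  have "C \<subseteq> V - X" using C unfolding component_def connected_in_def by blast
  then have "c \<in> set (tl p)" using c p(1,2) unfolding is_path_def by (cases p) auto
  then obtain ys zs where tl_split: "tl p = ys @ c # zs" using split_list by metis
  have "p \<noteq> []" using p(1) unfolding is_path_def by blast
  then have p_split: "p = (hd p # ys) @ c # zs" using tl_split by (cases p) auto
  have suffix: "path_from_to V E c (last p) (c # zs)" using path_from_to_suffix[OF p(1) p_split] .
  have "set (c # zs) \<subseteq> V - X"
    using suffix p(3) tl_split unfolding path_from_to_def is_path_def by auto
  moreover have "successively (adjacent E) (c # zs)"
    using suffix unfolding path_from_to_def is_path_iff_successively by blast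
  ultimately have "successively (adjacent (induced_edges E (V - X))) (c # zs)"
    using successively_mono[of "adjacent E" "c # zs" "adjacent (induced_edges E (V - X))"]
    unfolding induced_edges_def by blast
  then have "reachable_in (V - X) (induced_edges E (V - X)) c (last p)"
    using \<open>set (c # zs) \<subseteq> V - X\<close> suffix unfolding reachable_in_def path_from_to_def by blast
  then show False using component_reachable_closed[OF C c(2)] p(4) by blast
qed

section \<open>Systems of disjoint paths\<close>

definition disjoint_paths :: "'a set \<Rightarrow> 'a set set \<Rightarrow> 'a set \<Rightarrow> 'a set \<Rightarrow> 'a list set \<Rightarrow> bool" where
  "disjoint_paths V E A B P \<longleftrightarrow> (\<forall>p\<in>P. is_path V E p \<and> hd p \<in> A \<and> last p \<in> B) \<and>
     (\<forall>p\<in>P. \<forall>q\<in>P. p \<noteq> q \<longrightarrow> set p \<inter> set q = {})"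

lemma disjoint_pathsD:
  assumes "disjoint_paths V E A B P" "p \<in> P"
  shows "is_path V E p" "hd p \<in> A" "last p \<in> B" "p \<noteq> []"
  using assms unfolding disjoint_paths_def is_path_def by auto

lemma disjoint_paths_disjoint:
  "disjoint_paths V E A B P \<Longrightarrow> p \<in> P \<Longrightarrow> q \<in> P \<Longrightarrow> p \<noteq> q \<Longrightarrow> set p \<inter> set q = {}"
  unfolding disjoint_paths_def by blast

lemma disjoint_paths_eqI:
  "disjoint_paths V E A B P \<Longrightarrow> p \<in> P \<Longrightarrow> q \<in> P \<Longrightarrow> v \<in> set p \<Longrightarrow> v \<in> set q \<Longrightarrow> p = q"
  unfolding disjoint_paths_def by blast

lemma disjoint_paths_mono:
  "disjoint_paths V E A B P \<Longrightarrow> E \<subseteq> E' \<Longrightarrow> disjoint_paths V E' A B P"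
  unfolding disjoint_paths_def using is_path_mono by blast

lemma disjoint_paths_rev:
  "disjoint_paths V E A B P \<Longrightarrow> disjoint_paths V E B A (rev ` P)"
  unfolding disjoint_paths_def using is_path_rev by (fastforce simp: hd_rev last_rev)

lemma disjoint_paths_inj_on_hd: "disjoint_paths V E A B P \<Longrightarrow> inj_on hd P"
  by (rule inj_onI) (metis disjoint_pathsD(4) disjoint_paths_eqI list.set_sel(1))

lemma disjoint_paths_inj_on_last: "disjoint_paths V E A B P \<Longrightarrow> inj_on last P"
  by (rule inj_onI) (metis disjoint_pathsD(4) disjoint_paths_eqI last_in_set)

lemma disjoint_paths_bij_betw_hd:
  assumes "disjoint_paths V E A B P" "finite A" "card P = card A"
  shows "bij_betw hd P A"
proof -
  have "hd ` P = A"
    using assms disjoint_pathsD(2)[OF assms(1)] card_image[OF disjoint_paths_inj_on_hd[OF assms(1)]]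
    by (intro card_subset_eq) auto
  then show ?thesis using disjoint_paths_inj_on_hd[OF assms(1)] unfolding bij_betw_def by blast
qed

lemma disjoint_paths_bij_betw_last:
  assumes "disjoint_paths V E A B P" "finite B" "card P = card B"
  shows "bij_betw last P B"
proof -
  have "last ` P = B"
    using assms disjoint_pathsD(3)[OF assms(1)] card_image[OF disjoint_paths_inj_on_last[OF assms(1)]]
    by (intro card_subset_eq) auto
  then show ?thesis using disjoint_paths_inj_on_last[OF assms(1)] unfolding bij_betw_def by blast
qed

lemma disjoint_paths_truncate_last:
  assumes "disjoint_paths V E A B P" "finite P"
  shows "\<exists>P'. disjoint_paths V E A B P' \<and> finite P' \<and> card P' = card P \<and>
    (\<forall>p\<in>P'. set (butlast p) \<inter> B = {})"
proof -
  have "\<forall>p\<in>P. \<exists>p'. is_path V E p' \<and> hd p' = hd p \<and> last p' \<in> B \<and> set p' \<subseteq> set p \<and>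
      set (butlast p') \<inter> B = {}"
    using path_truncate disjoint_pathsD[OF assms(1)] by blast
  then obtain f where f: "\<And>p. p \<in> P \<Longrightarrow> is_path V E (f p) \<and> hd (f p) = hd p \<and> last (f p) \<in> B \<and>
      set (f p) \<subseteq> set p \<and> set (butlast (f p)) \<inter> B = {}"
    by metis
  have f_disjoint: "set (f p) \<inter> set (f p') = {}" if "p \<in> P" "p' \<in> P" "f p \<noteq> f p'" for p p'
    using f[OF that(1)] f[OF that(2)] disjoint_paths_disjoint[OF assms(1) that(1,2)] that(3) by blast
  have "inj_on f P"
    using f disjoint_paths_inj_on_hd[OF assms(1)] unfolding inj_on_def by metis
  moreover have "disjoint_paths V E A B (f ` P)"
    using f f_disjoint disjoint_pathsD(2)[OF assms(1)] unfolding disjoint_paths_def by auto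
  ultimately show ?thesis using f assms(2) card_image by blast
qed

lemma disjoint_paths_truncate_hd:
  assumes "disjoint_paths V E A B P" "finite P"
  shows "\<exists>P'. disjoint_paths V E A B P' \<and> finite P' \<and> card P' = card P \<and>
    (\<forall>p\<in>P'. set (tl p) \<inter> A = {})"
proof -
  obtain P' where P': "disjoint_paths V E B A P'" "finite P'" "card P' = card (rev ` P)"
    "\<forall>p\<in>P'. set (butlast p) \<inter> A = {}"
    using disjoint_paths_truncate_last[OF disjoint_paths_rev[OF assms(1)]] assms(2) by blast
  have "tl (rev p) = rev (butlast p)" for p :: "'a list"
    by (metis butlast_rev rev_rev_ident)
  then have "\<forall>p\<in>rev ` P'. set (tl p) \<inter> A = {}"
    using P'(4) by simp
  moreover have "card (rev ` P') = card P" "card (rev ` P) = card P"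
    using P'(3) by (simp_all add: card_image)
  ultimately show ?thesis
    using disjoint_paths_rev[OF P'(1)] P'(2,3) by (intro exI[of _ "rev ` P'"]) simp
qed

lemma disjoint_paths_concat:
  assumes P: "disjoint_paths V E A M P" "bij_betw last P M"
    and Q: "disjoint_paths V E M B Q" "bij_betw hd Q M"
    and meet: "\<And>p q v. p \<in> P \<Longrightarrow> q \<in> Q \<Longrightarrow> v \<in> set p \<Longrightarrow> v \<in> set q \<Longrightarrow> v = last p \<and> v = hd q"
    and "finite M"
  shows "\<exists>R. disjoint_paths V E A B R \<and> finite R \<and> card R = card M"
proof -
  define p where "p m = the_inv_into P last m" for m
  define q where "q m = the_inv_into Q hd m" for m
  have p: "p m \<in> P" "last (p m) = m" if "m \<in> M" for m
    using that bij_betw_apply[OF bij_betw_the_inv_into[OF P(2)]] f_the_inv_into_f_bij_betw[OF P(2)]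
    unfolding p_def by auto
  have q: "q m \<in> Q" "hd (q m) = m" if "m \<in> M" for m
    using that bij_betw_apply[OF bij_betw_the_inv_into[OF Q(2)]] f_the_inv_into_f_bij_betw[OF Q(2)]
    unfolding q_def by auto
  have pq_meet: "set (p m) \<inter> set (q m') \<subseteq> {v. v = m \<and> v = m'}" if "m \<in> M" "m' \<in> M" for m m'
    using meet[OF p(1) q(1), OF that] p(2)[OF that(1)] q(2)[OF that(2)] by auto
  define r where "r m = p m @ tl (q m)" for m
  have r_path: "is_path V E (r m) \<and> hd (r m) \<in> A \<and> last (r m) \<in> B" if "m \<in> M" for m
  proof -
    have "path_from_to V E (hd (p m)) m (p m)" "path_from_to V E m (last (q m)) (q m)"
      using disjoint_pathsD(1)[OF P(1) p(1)] disjoint_pathsD(1)[OF Q(1) q(1)] p(2) q(2) that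
      unfolding path_from_to_def by simp_all
    from path_from_to_append_tl[OF this] pq_meet[OF that that]
    show ?thesis using disjoint_pathsD(2)[OF P(1) p(1)] disjoint_pathsD(3)[OF Q(1) q(1)] that
      unfolding r_def path_from_to_def by auto
  qed
  have r_set: "m \<in> set (r m)" "set (r m) \<subseteq> set (p m) \<union> set (q m)" if "m \<in> M" for m
  proof -
    show "m \<in> set (r m)"
      using p(2)[OF that] last_in_set[OF disjoint_pathsD(4)[OF P(1) p(1)[OF that]]]
      unfolding r_def by simp
    show "set (r m) \<subseteq> set (p m) \<union> set (q m)" unfolding r_def by (cases "q m") auto
  qed
  have r_disjoint: "set (r m) \<inter> set (r m') = {}" if "m \<in> M" "m' \<in> M" "m \<noteq> m'" for m m'
  proof -
    have "p m \<noteq> p m'" "q m \<noteq> q m'" using p(2) q(2) that by metis+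
    then have "set (p m) \<inter> set (p m') = {}" "set (q m) \<inter> set (q m') = {}"
      using disjoint_paths_disjoint[OF P(1) p(1)[OF that(1)] p(1)[OF that(2)]]
        disjoint_paths_disjoint[OF Q(1) q(1)[OF that(1)] q(1)[OF that(2)]] by simp_all
    moreover have "set (p m) \<inter> set (q m') = {}" "set (p m') \<inter> set (q m) = {}"
      using pq_meet that by blast+
    ultimately show ?thesis using r_set(2)[OF that(1)] r_set(2)[OF that(2)] by blast
  qed
  have "inj_on r M"
  proof (rule inj_onI)
    fix m m' assume "m \<in> M" "m' \<in> M" "r m = r m'"
    then show "m = m'" using r_disjoint r_set(1) by (metis disjoint_iff)
  qed
  moreover have "disjoint_paths V E A B (r ` M)"
    unfolding disjoint_paths_def using r_path r_disjoint by auto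
  ultimately show ?thesis using \<open>finite M\<close> card_image by blast
qed

section \<open>Menger's theorem\<close>

lemma separates_sym: "separates V E S A B \<Longrightarrow> separates V E S B A"
  unfolding separates_def by (metis path_from_to_rev set_rev)

definition reach_avoiding :: "'a set \<Rightarrow> 'a set set \<Rightarrow> 'a set \<Rightarrow> 'a set \<Rightarrow> 'a set" where
  "reach_avoiding V E S A = {v. \<exists>a\<in>A. \<exists>p. path_from_to V E a v p \<and> set p \<inter> S = {}}"

lemma reach_avoiding_notin: "v \<in> reach_avoiding V E S A \<Longrightarrow> v \<notin> S"
  unfolding reach_avoiding_def using path_from_to_ends by fast

lemma reach_avoiding_disjoint:
  assumes "separates V E S A B"
  shows "reach_avoiding V E S A \<inter> reach_avoiding V E S B = {}"
proof -
  have False if a: "a \<in> A" "path_from_to V E a v p" "set p \<inter> S = {}"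
    and b: "b \<in> B" "path_from_to V E b v q" "set q \<inter> S = {}" for a b v p q
  proof -
    obtain r where "path_from_to V E a b r" "set r \<subseteq> set p \<union> set (rev q)"
      using path_from_to_trans[OF a(2) path_from_to_rev[OF b(2)]] by blast
    moreover have "set r \<inter> S = {}" using calculation(2) a(3) b(3) by auto
    ultimately show False using assms a(1) b(1) unfolding separates_def by blast
  qed
  then show ?thesis unfolding reach_avoiding_def by blast
qed

lemma reach_avoiding_along_path:
  assumes "is_path V E p" "hd p \<in> A" "set (butlast p) \<inter> S = {}" "v \<in> set p" "v \<notin> S"
  shows "v \<in> reach_avoiding V E S A"
proof -
  obtain ys zs where p: "p = ys @ v # zs" using split_list[OF assms(4)] by blast
  have "set ys \<subseteq> set (butlast p)" unfolding p by (simp add: butlast_append)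
  then have "set (ys @ [v]) \<inter> S = {}" using assms(3,5) by auto
  then show ?thesis
    using path_from_to_prefix[OF assms(1) p] assms(2) unfolding reach_avoiding_def by blast
qed

lemma reach_avoiding_along_path_rev:
  assumes "is_path V E p" "last p \<in> B" "set (tl p) \<inter> S = {}" "v \<in> set p" "v \<notin> S"
  shows "v \<in> reach_avoiding V E S B"
  using reach_avoiding_along_path[OF is_path_rev[OF assms(1)]] assms
  by (metis butlast_rev hd_rev set_rev)

lemma separates_insert_endpoint:
  assumes "separates V (E - {{x, y}}) S A B" "x \<in> V"
  shows "separates V E (insert x S) A B"
  unfolding separates_def
proof (intro conjI ballI allI impI)
  show "insert x S \<subseteq> V" using assms unfolding separates_def by blast
next
  fix a b p assume ab: "a \<in> A" "b \<in> B" and p: "path_from_to V E a b p"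
  show "set p \<inter> insert x S \<noteq> {}"
  proof (cases "x \<in> set p")
    case False
    then have "path_from_to V (E - {{x, y}}) a b p"
      using is_path_remove_edge[of V E p x y] p unfolding path_from_to_def by blast
    then show ?thesis using assms(1) ab unfolding separates_def by blast
  qed blast
qed

lemma separates_via_edge_endpoint:
  assumes S: "separates V (E - {{x, y}}) S A B"
    and y: "y \<notin> reach_avoiding V (E - {{x, y}}) S A"
    and T: "separates V (E - {{x, y}}) T A (insert x S)"
    and "x \<noteq> y"
  shows "separates V E T A B"
  unfolding separates_def
proof (intro conjI ballI allI impI)
  show "T \<subseteq> V" using T unfolding separates_def by blast
next
  fix a b r assume a: "a \<in> A" and b: "b \<in> B" and r: "path_from_to V E a b r"
  have r_path: "is_path V E r" and hd_r: "hd r = a" using r unfolding path_from_to_def by auto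
  have "\<exists>v\<in>set r. v \<in> insert x S"
  proof (cases "x \<in> set r")
    case False
    then have "path_from_to V (E - {{x, y}}) a b r"
      using is_path_remove_edge[OF r_path] r unfolding path_from_to_def by blast
    then show ?thesis using S a b unfolding separates_def by blast
  qed blast
  then obtain ys v zs where r_split: "r = ys @ v # zs" "v \<in> insert x S"
    and ys: "\<forall>u\<in>set ys. u \<notin> insert x S"
    by (rule split_list_first_propE)
  have q: "path_from_to V E a v (ys @ [v])" using path_from_to_prefix[OF r_path r_split(1)] hd_r by simp
  show "set r \<inter> T \<noteq> {}"
  proof (cases "y \<in> set ys")
    case False
    then have "x \<notin> set (ys @ [v]) \<or> y \<notin> set (ys @ [v])" using ys \<open>x \<noteq> y\<close> by auto
    then have "path_from_to V (E - {{x, y}}) a v (ys @ [v])"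
      using is_path_remove_edge[of V E "ys @ [v]" x y] q unfolding path_from_to_def by blast
    then have "set (ys @ [v]) \<inter> T \<noteq> {}" using T a r_split(2) unfolding separates_def by blast
    then show ?thesis unfolding r_split(1) by auto
  next
    case True
    then obtain ys1 ys2 where ys_split: "ys = ys1 @ y # ys2" using split_list by metis
    have "path_from_to V E a y (ys1 @ [y])"
      using path_from_to_prefix[OF r_path, of ys1 y "ys2 @ v # zs"] hd_r r_split(1) ys_split by simp
    moreover have "x \<notin> set (ys1 @ [y])" "set (ys1 @ [y]) \<inter> S = {}" using ys ys_split by auto
    ultimately have "path_from_to V (E - {{x, y}}) a y (ys1 @ [y])"
      using is_path_remove_edge[of V E "ys1 @ [y]" x y] unfolding path_from_to_def by blast
    then have "y \<in> reach_avoiding V (E - {{x, y}}) S A"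
      using a \<open>set (ys1 @ [y]) \<inter> S = {}\<close> unfolding reach_avoiding_def by blast
    then show ?thesis using y by contradiction
  qed
qed

lemma separators_across_edge:
  assumes large: "\<forall>S. separates V E S A B \<longrightarrow> k \<le> card S"
    and E': "E' = E - {{x, y}}" and S: "separates V E' S A B"
    and x: "x \<in> reach_avoiding V E' S A" and y: "y \<in> reach_avoiding V E' S B"
  shows "\<forall>T. separates V E' T A (insert x S) \<longrightarrow> k \<le> card T"
    and "\<forall>T. separates V E' T (insert y S) B \<longrightarrow> k \<le> card T"
proof -
  have disjoint: "reach_avoiding V E' S A \<inter> reach_avoiding V E' S B = {}"
    using reach_avoiding_disjoint[OF S] .
  then have "x \<noteq> y" "x \<notin> reach_avoiding V E' S B" "y \<notin> reach_avoiding V E' S A"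
    using x y by blast+
  then show "\<forall>T. separates V E' T A (insert x S) \<longrightarrow> k \<le> card T"
    using separates_via_edge_endpoint[OF S[unfolded E']] large unfolding E' by blast
  have E'_yx: "E' = E - {{y, x}}" using E' by (simp add: insert_commute)
  have "separates V E T A B" if "separates V E' T (insert y S) B" for T
    using separates_via_edge_endpoint[OF separates_sym[OF S, unfolded E'_yx]
        \<open>x \<notin> reach_avoiding V E' S B\<close>[unfolded E'_yx] separates_sym[OF that, unfolded E'_yx]
        \<open>x \<noteq> y\<close>[symmetric]]
    by (rule separates_sym)
  then show "\<forall>T. separates V E' T (insert y S) B \<longrightarrow> k \<le> card T" using large by blast
qed

lemma separating_edge_orientation:
  assumes S: "separates V (E - {{x0, y0}}) S A B" and "x0 \<noteq> y0"
    and p: "a \<in> A" "b \<in> B" "path_from_to V E a b p" "set p \<inter> S = {}"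
  shows "\<exists>x y. {x, y} = {x0, y0} \<and> x \<in> reach_avoiding V (E - {{x0, y0}}) S A \<and>
    y \<in> reach_avoiding V (E - {{x0, y0}}) S B"
proof -
  have p_path: "is_path V E p" "hd p = a" "last p = b" using p(3) unfolding path_from_to_def by auto
  have "x0 \<in> set p \<and> y0 \<in> set p"
  proof (rule ccontr)
    assume "\<not> (x0 \<in> set p \<and> y0 \<in> set p)"
    then have "path_from_to V (E - {{x0, y0}}) a b p"
      using is_path_remove_edge[OF p_path(1)] p_path(2,3) unfolding path_from_to_def by blast
    then show False using S p(1,2,4) unfolding separates_def by blast
  qed
  then obtain u w ys ms zs where uw: "{u, w} = {x0, y0}" and p_split: "p = ys @ u # ms @ w # zs"
    using split_list_two \<open>x0 \<noteq> y0\<close> by metis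
  have "distinct p" using p_path(1) unfolding is_path_def by blast
  then have "w \<notin> set (ys @ [u])" "u \<notin> set (w # zs)" unfolding p_split by auto
  moreover have "path_from_to V E a u (ys @ [u])" "path_from_to V E w b (w # zs)"
    using path_from_to_prefix[OF p_path(1) p_split] path_from_to_suffix[of V E p "ys @ u # ms" w zs]
      p_path p_split by simp_all
  ultimately have u_path: "path_from_to V (E - {{u, w}}) a u (ys @ [u])"
    and w_path: "path_from_to V (E - {{u, w}}) w b (w # zs)"
    using is_path_remove_edge[of V E "ys @ [u]" u w] is_path_remove_edge[of V E "w # zs" u w]
    unfolding path_from_to_def by simp_all
  have "set (ys @ [u]) \<inter> S = {}" "set (rev (w # zs)) \<inter> S = {}"
    using p(4) unfolding p_split by auto
  then have "u \<in> reach_avoiding V (E - {{u, w}}) S A" "w \<in> reach_avoiding V (E - {{u, w}}) S B"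
    using p(1,2) u_path path_from_to_rev[OF w_path] unfolding reach_avoiding_def by blast+
  then show ?thesis using uw by (intro exI[of _ u] exI[of _ w]) simp
qed

lemma disjoint_paths_extend_by_edge:
  assumes P: "disjoint_paths V E A (insert x S) P"
    and y: "\<forall>p\<in>P. y \<notin> set p" "y \<in> V" and "{x, y} \<in> E"
  defines "extend p \<equiv> if last p = x then p @ [y] else p"
  shows "disjoint_paths V E A (insert y S) (extend ` P) \<and> card (extend ` P) = card P"
proof -
  have extend_path: "is_path V E (extend p) \<and> hd (extend p) = hd p \<and> last (extend p) \<in> insert y S"
    if "p \<in> P" for p
  proof (cases "last p = x")
    case True
    have "x \<in> set p" using True last_in_set[OF disjoint_pathsD(4)[OF P that]] by simp
    then have "x \<in> V" "x \<noteq> y" using disjoint_pathsD(1)[OF P that] y(1) that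
      unfolding is_path_def by auto
    then have "path_from_to V E x y [x, y]"
      using y(2) \<open>{x, y} \<in> E\<close> unfolding path_from_to_def is_path_iff_successively by simp
    moreover have "path_from_to V E (hd p) x p"
      using disjoint_pathsD(1)[OF P that] True unfolding path_from_to_def by simp
    ultimately have "path_from_to V E (hd p) y (p @ [y])"
      using path_from_to_append_tl[of V E "hd p" x p y "[x, y]"] y(1) that by auto
    then show ?thesis using True unfolding extend_def path_from_to_def by simp
  next
    case False
    then show ?thesis using disjoint_pathsD(1-3)[OF P that] unfolding extend_def by simp
  qed
  have extend_set: "set (extend p) \<subseteq> insert y (set p)" "y \<in> set (extend p) \<Longrightarrow> last p = x"
    if "p \<in> P" for p
    using y(1) that unfolding extend_def by (auto split: if_splits)
  have "inj_on extend P"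
  proof (rule inj_onI)
    fix p p' assume "p \<in> P" "p' \<in> P" "extend p = extend p'"
    then show "p = p'" using extend_path inj_onD[OF disjoint_paths_inj_on_hd[OF P]] by metis
  qed
  moreover have "set (extend p) \<inter> set (extend p') = {}" if "p \<in> P" "p' \<in> P" "p \<noteq> p'" for p p'
  proof -
    have "last p \<noteq> last p'" using disjoint_paths_inj_on_last[OF P] that unfolding inj_on_def by blast
    then have "y \<notin> set (extend p) \<inter> set (extend p')" using extend_set that by blast
    then show ?thesis
      using disjoint_paths_disjoint[OF P that] extend_set(1)[OF that(1)] extend_set(1)[OF that(2)] by blast
  qed
  moreover have "\<forall>p\<in>extend ` P. is_path V E p \<and> hd p \<in> A \<and> last p \<in> insert y S"
    using extend_path disjoint_pathsD(2)[OF P] by auto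
  ultimately show ?thesis unfolding disjoint_paths_def by (auto simp: card_image)
qed

lemma disjoint_paths_across_edge:
  assumes E': "E' = E - {{x, y}}" and "{x, y} \<in> E" and "finite S"
    and S: "separates V E' S A B"
    and x: "x \<in> reach_avoiding V E' S A" and y: "y \<in> reach_avoiding V E' S B"
    and P: "disjoint_paths V E' A (insert x S) P" "card P = Suc (card S)"
      "\<forall>p\<in>P. set (butlast p) \<inter> insert x S = {}"
    and Q: "disjoint_paths V E' (insert y S) B Q" "card Q = Suc (card S)"
      "\<forall>q\<in>Q. set (tl q) \<inter> insert y S = {}"
  shows "\<exists>R. disjoint_paths V E A B R \<and> finite R \<and> card R = Suc (card S)"
proof -
  have EE': "E' \<subseteq> E" unfolding E' by blast
  have reach_disjoint: "reach_avoiding V E' S A \<inter> reach_avoiding V E' S B = {}"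
    using reach_avoiding_disjoint[OF S] .
  have xS: "x \<notin> S" and yS: "y \<notin> S" using reach_avoiding_notin x y by fast+
  have "y \<in> V" using y path_from_to_ends unfolding reach_avoiding_def path_from_to_def is_path_def
    by fast
  have on_P: "v \<in> reach_avoiding V E' S A" if "p \<in> P" "v \<in> set p" "v \<notin> S" for p v
    using reach_avoiding_along_path[OF disjoint_pathsD(1,2)[OF P(1) that(1)]] P(3) that by blast
  have on_Q: "v \<in> reach_avoiding V E' S B" if "q \<in> Q" "v \<in> set q" "v \<notin> S" for q v
    using reach_avoiding_along_path_rev[OF disjoint_pathsD(1,3)[OF Q(1) that(1)]] Q(3) that by blast
  have y_off_P: "\<forall>p\<in>P. y \<notin> set p" using on_P yS y reach_disjoint by blast
  define extend where "extend p = (if last p = x then p @ [y] else p)" for p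
  have P': "disjoint_paths V E A (insert y S) (extend ` P)" "card (extend ` P) = Suc (card S)"
    using disjoint_paths_extend_by_edge[OF disjoint_paths_mono[OF P(1) EE'] y_off_P \<open>y \<in> V\<close>
        \<open>{x, y} \<in> E\<close>] P(2) unfolding extend_def by simp_all
  have meet: "v = last p' \<and> v = hd q"
    if p': "p' \<in> extend ` P" "v \<in> set p'" and q: "q \<in> Q" "v \<in> set q" for p' q v
  proof -
    obtain p where p: "p \<in> P" "p' = extend p" using p'(1) by blast
    have hd_q: "v = hd q" if "v \<in> insert y S"
      using bspec[OF Q(3) q(1)] q(2) that disjoint_pathsD(4)[OF Q(1) q(1)] by (cases q) auto
    show ?thesis
    proof (cases "v \<in> set p")
      case True
      then have "v \<in> S" using on_P on_Q p(1) q reach_disjoint by blast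
      then have "v = last p"
        using bspec[OF P(3) p(1)] True \<open>v \<in> S\<close> by (cases p rule: rev_cases) auto
      then show ?thesis using \<open>v \<in> S\<close> xS hd_q p(2) unfolding extend_def by auto
    next
      case False
      then have "v = y" "last p = x" using p'(2) p(2) unfolding extend_def by (auto split: if_splits)
      then show ?thesis using hd_q p(2) unfolding extend_def by simp
    qed
  qed
  have "finite (insert y S)" using \<open>finite S\<close> by simp
  moreover have "card (insert y S) = Suc (card S)" using \<open>finite S\<close> yS by simp
  ultimately show ?thesis
    using disjoint_paths_concat[OF P'(1) disjoint_paths_bij_betw_last[OF P'(1)]
        disjoint_paths_mono[OF Q(1) EE'] disjoint_paths_bij_betw_hd[OF Q(1)] meet] P'(2) Q(2)
    by simp
qed

lemma menger_no_edges:
  assumes "\<forall>S. separates V {} S A B \<longrightarrow> k \<le> card S"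
  shows "\<exists>P. disjoint_paths V {} A B P \<and> finite P \<and> card P = k"
proof -
  have trivial: "p = [a] \<and> a = b \<and> a \<in> V" if "path_from_to V {} a b p" for a b p
  proof -
    have "p \<noteq> []" "set p \<subseteq> V" "successively (adjacent {}) p" "hd p = a" "last p = b"
      using that unfolding path_from_to_def is_path_iff_successively by auto
    then show ?thesis by (cases p; cases "tl p") auto
  qed
  have "separates V {} (A \<inter> B \<inter> V) A B"
    unfolding separates_def
  proof (intro conjI ballI allI impI)
    fix a b p assume "a \<in> A" "b \<in> B" "path_from_to V {} a b p"
    then show "set p \<inter> (A \<inter> B \<inter> V) \<noteq> {}" using trivial by fastforce
  qed blast
  then obtain D where D: "D \<subseteq> A \<inter> B \<inter> V" "card D = k" "finite D"
    using assms obtain_subset_with_card_n by metis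
  have "disjoint_paths V {} A B ((\<lambda>v. [v]) ` D)"
    using D(1) unfolding disjoint_paths_def is_path_def by auto
  moreover have "card ((\<lambda>v. [v]) ` D) = k" using D(2) by (simp add: card_image inj_on_def)
  ultimately show ?thesis using D(3) by blast
qed

text \<open>
  The induction step of Diestel's second proof of Menger's theorem: if deleting the edge \<open>xy\<close>
  leaves an \<open>A\<close>--\<open>B\<close> separator \<open>S\<close> with \<open>|S| < k\<close>, then \<open>S \<union> {x}\<close> and \<open>S \<union> {y}\<close> are
  smallest separators of \<open>G\<close>, and linkages from \<open>A\<close> onto \<open>S \<union> {x}\<close> and from \<open>S \<union> {y}\<close>
  to \<open>B\<close> in \<open>G - xy\<close> are glued along \<open>xy\<close>.
\<close>

lemma menger_step_small_separator:
  assumes G: "graph V E" and e: "{x0, y0} \<in> E" "x0 \<noteq> y0"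
    and large: "\<forall>S. separates V E S A B \<longrightarrow> k \<le> card S"
    and S: "separates V (E - {{x0, y0}}) S A B" "card S < k"
    and IH: "\<And>A B. \<forall>T. separates V (E - {{x0, y0}}) T A B \<longrightarrow> k \<le> card T \<Longrightarrow>
      \<exists>P. disjoint_paths V (E - {{x0, y0}}) A B P \<and> finite P \<and> card P = k"
  shows "\<exists>P. disjoint_paths V E A B P \<and> finite P \<and> card P = k"
proof -
  define E' where "E' = E - {{x0, y0}}"
  have "S \<subseteq> V" using S(1) unfolding separates_def by blast
  then have "finite S" using G finite_subset unfolding graph_def by blast
  have "\<not> separates V E S A B" using large S(2) by force
  then have "\<exists>a\<in>A. \<exists>b\<in>B. \<exists>p. path_from_to V E a b p \<and> set p \<inter> S = {}"
    using \<open>S \<subseteq> V\<close> unfolding separates_def by blast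
  then obtain a b p where ab: "a \<in> A" "b \<in> B" and p: "path_from_to V E a b p" "set p \<inter> S = {}"
    by blast
  obtain x y where xy: "{x, y} = {x0, y0}" and x: "x \<in> reach_avoiding V E' S A"
    and y: "y \<in> reach_avoiding V E' S B"
    using separating_edge_orientation[OF S(1) e(2) ab p] unfolding E'_def by blast
  have E': "E' = E - {{x, y}}" and "{x, y} \<in> E" using xy e(1) unfolding E'_def by auto
  have "x \<notin> S" "x \<in> V" using x reach_avoiding_notin path_from_to_ends
    unfolding reach_avoiding_def path_from_to_def is_path_def by fast+
  have "separates V E (insert x S) A B"
    using separates_insert_endpoint[OF S(1)[folded E'_def, unfolded E'] \<open>x \<in> V\<close>] .
  then have k: "k = Suc (card S)" using large S(2) \<open>finite S\<close> \<open>x \<notin> S\<close> by fastforce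
  note separators = separators_across_edge[OF large E' S(1)[folded E'_def] x y]
  obtain P where P: "disjoint_paths V E' A (insert x S) P" "card P = k"
    "\<forall>p\<in>P. set (butlast p) \<inter> insert x S = {}"
    using IH[folded E'_def, OF separators(1)] disjoint_paths_truncate_last by metis
  obtain Q where Q: "disjoint_paths V E' (insert y S) B Q" "card Q = k"
    "\<forall>q\<in>Q. set (tl q) \<inter> insert y S = {}"
    using IH[folded E'_def, OF separators(2)] disjoint_paths_truncate_hd by metis
  show ?thesis
    using disjoint_paths_across_edge[OF E' \<open>{x, y} \<in> E\<close> \<open>finite S\<close> S(1)[folded E'_def] x y
        P[unfolded k] Q[unfolded k]] k by blast
qed

theorem menger:
  assumes "graph V E" "\<forall>S. separates V E S A B \<longrightarrow> k \<le> card S"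
  shows "\<exists>P. disjoint_paths V E A B P \<and> finite P \<and> card P = k"
  using assms
proof (induction "card E" arbitrary: E A B k rule: less_induct)
  case less
  note G = less.prems(1) and large = less.prems(2)
  show ?case
  proof (cases "E = {}")
    case True
    then show ?thesis using menger_no_edges large by simp
  next
    case False
    then obtain e where "e \<in> E" by blast
    then obtain x0 y0 where "e = {x0, y0}" "x0 \<noteq> y0" using G unfolding graph_def by meson
    then have e: "{x0, y0} \<in> E" "x0 \<noteq> y0" using \<open>e \<in> E\<close> by simp_all
    let ?E' = "E - {{x0, y0}}"
    have smaller: "card ?E' < card E" using card_Diff1_less[OF graph_finite_edges[OF G] e(1)] .
    have G': "graph V ?E'" using G unfolding graph_def by blast
    show ?thesis
    proof (cases "\<forall>S. separates V ?E' S A B \<longrightarrow> k \<le> card S")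
      case True
      then show ?thesis using less.hyps[OF smaller G'] disjoint_paths_mono[of V ?E' A B _ E] by blast
    next
      case False
      then obtain S where "separates V ?E' S A B" "card S < k" by force
      then show ?thesis
        using menger_step_small_separator[OF G e large] less.hyps[OF smaller G'] by blast
    qed
  qed
qed

lemma menger_linkage:
  assumes "graph V E" "A \<subseteq> V" "\<forall>S. separates V E S A B \<longrightarrow> card A \<le> card S"
  obtains P where "\<And>a. a \<in> A \<Longrightarrow> is_path V E (P a) \<and> hd (P a) = a \<and> last (P a) \<in> B \<and>
      set (tl (P a)) \<inter> A = {}"
    and "\<And>a a'. a \<in> A \<Longrightarrow> a' \<in> A \<Longrightarrow> a \<noteq> a' \<Longrightarrow> set (P a) \<inter> set (P a') = {}"
proof -
  have "finite A" using assms(1,2) finite_subset unfolding graph_def by blast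
  obtain Q0 where "disjoint_paths V E A B Q0" "finite Q0" "card Q0 = card A"
    using menger[OF assms(1,3)] by blast
  then obtain Q where Q: "disjoint_paths V E A B Q" "card Q = card A" "\<forall>q\<in>Q. set (tl q) \<inter> A = {}"
    using disjoint_paths_truncate_hd by metis
  have bij: "bij_betw hd Q A" using disjoint_paths_bij_betw_hd[OF Q(1) \<open>finite A\<close> Q(2)] .
  define P where "P a = the_inv_into Q hd a" for a
  have P: "P a \<in> Q" "hd (P a) = a" if "a \<in> A" for a
    using that bij bij_betw_the_inv_into[OF bij] f_the_inv_into_f_bij_betw[OF bij]
    unfolding P_def bij_betw_def by auto
  show ?thesis
  proof
    show "is_path V E (P a) \<and> hd (P a) = a \<and> last (P a) \<in> B \<and> set (tl (P a)) \<inter> A = {}"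
      if "a \<in> A" for a
      using P[OF that] disjoint_pathsD(1,3)[OF Q(1)] Q(3) by blast
    show "set (P a) \<inter> set (P a') = {}" if "a \<in> A" "a' \<in> A" "a \<noteq> a'" for a a'
      using disjoint_paths_disjoint[OF Q(1)] P that by metis
  qed
qed

section \<open>Paths in trees\<close>

lemma two_le_degree_inner_vertex:
  assumes "graph N ET" "is_path N ET (ys @ s # zs)" "ys \<noteq> []" "zs \<noteq> []"
  shows "2 \<le> degree ET s"
proof -
  have "successively (adjacent ET) ((butlast ys @ [last ys]) @ s # hd zs # tl zs)"
    using assms(2-4) unfolding is_path_iff_successively by simp
  then have edges: "{last ys, s} \<in> ET" "{s, hd zs} \<in> ET"
    by (simp_all add: successively_append_iff)
  have "distinct ((butlast ys @ [last ys]) @ s # hd zs # tl zs)"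
    using assms(2-4) unfolding is_path_def by simp
  then have "{last ys, s} \<noteq> {s, hd zs}" by (auto simp: doubleton_eq_iff)
  then have "card {{last ys, s}, {s, hd zs}} = 2" by simp
  moreover have "{{last ys, s}, {s, hd zs}} \<subseteq> {e \<in> ET. s \<in> e}" using edges by auto
  moreover have "finite {e \<in> ET. s \<in> e}" using graph_finite_edges[OF assms(1)] by simp
  ultimately show ?thesis unfolding degree_def by (metis card_mono)
qed

definition tree_path :: "'b set \<Rightarrow> 'b set set \<Rightarrow> 'b \<Rightarrow> 'b \<Rightarrow> 'b list" where
  "tree_path N ET a b = (THE p. path_from_to N ET a b p)"

lemma path_from_to_tree_path:
  "tree N ET \<Longrightarrow> a \<in> N \<Longrightarrow> b \<in> N \<Longrightarrow> path_from_to N ET a b (tree_path N ET a b)"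
  unfolding tree_def tree_path_def by (metis theI')

lemma tree_path_unique: "tree N ET \<Longrightarrow> path_from_to N ET a b p \<Longrightarrow> tree_path N ET a b = p"
  unfolding tree_path_def tree_def
  by (metis (no_types, lifting) path_from_to_ends the1_equality is_path_def path_from_to_def subsetD)

lemma tree_path_subset:
  assumes "tree N ET" "W \<subseteq> N" "reachable_in W ET a b"
  shows "set (tree_path N ET a b) \<subseteq> W"
  using reachable_in_path[OF assms(3,2)] tree_path_unique[OF assms(1)] by blast

lemma leaf_on_tree_path:
  assumes "tree N ET" "leaf N ET s" "a \<in> N" "b \<in> N" "s \<in> set (tree_path N ET a b)"
  shows "s = a \<or> s = b"
proof (rule ccontr)
  assume "\<not> (s = a \<or> s = b)"
  obtain ys zs where split: "tree_path N ET a b = ys @ s # zs" using split_list[OF assms(5)] by blast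
  have p: "is_path N ET (tree_path N ET a b)" "hd (tree_path N ET a b) = a"
    "last (tree_path N ET a b) = b"
    using path_from_to_tree_path[OF assms(1,3,4)] unfolding path_from_to_def by auto
  then have "ys \<noteq> []" "zs \<noteq> []" using \<open>\<not> (s = a \<or> s = b)\<close> unfolding split by auto
  then have "2 \<le> degree ET s"
    using two_le_degree_inner_vertex[of N ET ys s zs] assms(1) p(1) unfolding split tree_def by blast
  then show False using assms(2) unfolding leaf_def by simp
qed

definition tree_span :: "'b set \<Rightarrow> 'b set set \<Rightarrow> 'b set \<Rightarrow> 'b \<Rightarrow> 'b set" where
  "tree_span N ET A t = (\<Union>a\<in>A. set (tree_path N ET a t))"

lemma tree_span_bounds:
  assumes "tree N ET" "A \<subseteq> N" "t \<in> N"
  shows "A \<subseteq> tree_span N ET A t" "tree_span N ET A t \<subseteq> N" "A \<noteq> {} \<Longrightarrow> t \<in> tree_span N ET A t"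
proof -
  have p: "a \<in> set (tree_path N ET a t)" "t \<in> set (tree_path N ET a t)"
    "set (tree_path N ET a t) \<subseteq> N" if "a \<in> A" for a
    using path_from_to_tree_path[OF assms(1) _ assms(3), of a] path_from_to_ends[of N ET a t] that assms(2)
    unfolding path_from_to_def is_path_def by auto
  show "A \<subseteq> tree_span N ET A t" "tree_span N ET A t \<subseteq> N" "A \<noteq> {} \<Longrightarrow> t \<in> tree_span N ET A t"
    using p unfolding tree_span_def by auto
qed

lemma connected_tree_span:
  assumes "tree N ET" "A \<subseteq> N" "t \<in> N"
  shows "connected_in N ET (tree_span N ET A t)"
proof (cases "A = {}")
  case True
  then show ?thesis unfolding connected_in_iff_reachable_in tree_span_def by simp
next
  case False
  have "reachable_in (tree_span N ET A t) ET t s" if s: "s \<in> tree_span N ET A t" for s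
  proof -
    obtain a where a: "a \<in> A" "s \<in> set (tree_path N ET a t)"
      using s unfolding tree_span_def by blast
    let ?p = "tree_path N ET a t"
    have "?p \<noteq> []" "successively (adjacent ET) ?p" "hd ?p = a" "last ?p = t"
      using path_from_to_tree_path[OF assms(1) _ assms(3), of a] a(1) assms(2)
      unfolding path_from_to_def is_path_iff_successively by auto
    then have "reachable_in (set ?p) ET a t" "reachable_in (set ?p) ET a s"
      using reachable_in_walk[of ?p ET] a(2) last_in_set by metis+
    then have "reachable_in (set ?p) ET t s" using reachable_in_trans reachable_in_sym by metis
    moreover have "set ?p \<subseteq> tree_span N ET A t" using a(1) unfolding tree_span_def by blast
    ultimately show ?thesis by (rule reachable_in_mono)
  qed
  then show ?thesis
    using connected_in_from_center[OF tree_span_bounds(2)[OF assms] tree_span_bounds(3)[OF assms False]]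
    by blast
qed

lemma tree_span_subset:
  assumes "tree N ET" "W \<subseteq> N" "\<And>a. a \<in> A \<Longrightarrow> reachable_in W ET a t"
  shows "tree_span N ET A t \<subseteq> W"
  unfolding tree_span_def using tree_path_subset[OF assms(1,2) assms(3)] by (rule UN_least)

lemma leaf_in_tree_span:
  assumes "tree N ET" "A \<subseteq> N" "t \<in> N" "leaf N ET s" "s \<noteq> t" "s \<in> tree_span N ET A t"
  shows "s \<in> A"
  using leaf_on_tree_path[OF assms(1,4) _ assms(3)] assms(2,5,6) unfolding tree_span_def by blast

section \<open>Vine decompositions\<close>

lemma reachable_in_vine_nodes_along_walk:
  assumes vd: "vine_decomposition V E N ET l"
    and "p \<noteq> []" "successively (adjacent E) p" "set p \<subseteq> V"
    and "s \<in> nodes_of N l (hd p)" "s' \<in> nodes_of N l (last p)"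
  shows "reachable_in (\<Union>v\<in>set p. nodes_of N l v) ET s s'"
  using assms(2-6)
proof (induction p arbitrary: s rule: induct_list012)
  case (2 v)
  then have "reachable_in (nodes_of N l v) ET s s'"
    using vd unfolding vine_decomposition_def connected_in_iff_reachable_in by simp
  then show ?case by (rule reachable_in_mono) simp
next
  case (3 v w rest)
  let ?U = "\<Union>x\<in>set (v # w # rest). nodes_of N l x"
  have "{v, w} \<in> E" using "3.prems"(2) by simp
  then obtain u u' where u: "u \<in> nodes_of N l v" "u' \<in> nodes_of N l w" "u = u' \<or> {u, u'} \<in> ET"
    using vd unfolding vine_decomposition_def by blast
  have "reachable_in (nodes_of N l v) ET s u"
    using vd "3.prems"(3,4) u(1) unfolding vine_decomposition_def connected_in_iff_reachable_in by simp
  then have "reachable_in ?U ET s u" by (rule reachable_in_mono) auto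
  moreover have "reachable_in ?U ET u u'"
    using u reachable_in_refl[of u ?U ET] reachable_in_edge[of u ?U u' ET] by auto
  moreover have "reachable_in (\<Union>x\<in>set (w # rest). nodes_of N l x) ET u' s'"
    using "3.IH"(2) "3.prems" u(2) by simp
  then have "reachable_in ?U ET u' s'" by (rule reachable_in_mono) auto
  ultimately show ?case using reachable_in_trans by metis
qed simp

lemma tree_span_along_path:
  assumes vd: "vine_decomposition V E N ET l" and p: "is_path V E p"
    and t: "t \<in> nodes_of N l (last p)"
  shows "tree_span N ET (nodes_of N l (hd p)) t \<subseteq> (\<Union>v\<in>set p. nodes_of N l v)"
proof (rule tree_span_subset)
  show "tree N ET" using vd unfolding vine_decomposition_def by blast
  show "(\<Union>v\<in>set p. nodes_of N l v) \<subseteq> N" unfolding nodes_of_def by blast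
  show "reachable_in (\<Union>v\<in>set p. nodes_of N l v) ET a t" if "a \<in> nodes_of N l (hd p)" for a
    using reachable_in_vine_nodes_along_walk[OF vd _ _ _ that t] p
    unfolding is_path_iff_successively by blast
qed

lemma vine_decomposition_induced:
  assumes vd: "vine_decomposition V E N ET lhat" and "W \<subseteq> V"
    and labels: "\<And>s. s \<in> N \<Longrightarrow> l s \<subseteq> W"
    and nodes: "\<And>v. v \<in> W \<Longrightarrow> nodes_of N lhat v \<subseteq> nodes_of N l v \<and> connected_in N ET (nodes_of N l v)"
  shows "vine_decomposition W (induced_edges E W) N ET l"
  unfolding vine_decomposition_def
proof (intro conjI ballI allI impI)
  show "tree N ET" using vd unfolding vine_decomposition_def by blast
  show "l s \<subseteq> W" if "s \<in> N" for s using labels that .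
  fix v assume "v \<in> W"
  then show "nodes_of N l v \<noteq> {}" "connected_in N ET (nodes_of N l v)"
    using nodes vd \<open>W \<subseteq> V\<close> unfolding vine_decomposition_def by blast+
next
  fix u v assume "{u, v} \<in> induced_edges E W"
  then have "{u, v} \<in> E" "u \<in> W" "v \<in> W" unfolding induced_edges_def by auto
  then show "\<exists>s\<in>nodes_of N l u. \<exists>s'\<in>nodes_of N l v. s = s' \<or> {s, s'} \<in> ET"
    using vd nodes unfolding vine_decomposition_def by blast
qed

lemma card_Un_le_by_disjoint_hits:
  assumes "finite L"
    and hit: "\<And>x. x \<in> K \<Longrightarrow> P x \<inter> (L - C) \<noteq> {}"
    and disjoint: "\<And>x y. x \<in> K \<Longrightarrow> y \<in> K \<Longrightarrow> x \<noteq> y \<Longrightarrow> P x \<inter> P y = {}"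
  shows "card ((L \<inter> C) \<union> K) \<le> card L"
proof -
  define f where "f x = (SOME v. v \<in> P x \<inter> (L - C))" for x
  have f: "f x \<in> P x \<inter> (L - C)" if "x \<in> K" for x
  proof -
    have "\<exists>v. v \<in> P x \<inter> (L - C)" using hit[OF that] by auto
    then show ?thesis unfolding f_def by (rule someI_ex)
  qed
  have "inj_on f K"
  proof (rule inj_onI)
    fix x y assume "x \<in> K" "y \<in> K" "f x = f y"
    then have "f x \<in> P x \<inter> P y" using f[of x] f[of y] by simp
    then show "x = y" using disjoint[OF \<open>x \<in> K\<close> \<open>y \<in> K\<close>] by auto
  qed
  then have "card K \<le> card (L - C)" using f \<open>finite L\<close> by (intro card_inj_on_le) auto
  moreover have "card L = card (L \<inter> C) + card (L - C)" using card_Int_Diff[OF \<open>finite L\<close>] .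
  ultimately show ?thesis using card_Un_le[of "L \<inter> C" K] by linarith
qed

definition pushed_labels ::
  "'b set \<Rightarrow> 'b set set \<Rightarrow> ('b \<Rightarrow> 'a set) \<Rightarrow> 'a set \<Rightarrow> 'a set \<Rightarrow> 'b \<Rightarrow> 'b \<Rightarrow> 'a set" where
  "pushed_labels N ET l C X t s = (l s \<inter> C) \<union> {x \<in> X. s \<in> tree_span N ET (nodes_of N l x) t}"

lemma nodes_of_pushed_labels:
  assumes "tree N ET" "t \<in> N" "C \<inter> X = {}"
  shows "x \<in> X \<Longrightarrow> nodes_of N (pushed_labels N ET l C X t) x = tree_span N ET (nodes_of N l x) t"
    and "v \<in> C \<Longrightarrow> nodes_of N (pushed_labels N ET l C X t) v = nodes_of N l v"
proof -
  have "nodes_of N l x \<subseteq> N" unfolding nodes_of_def by blast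
  then have "tree_span N ET (nodes_of N l x) t \<subseteq> N"
    by (rule tree_span_bounds(2)[OF assms(1) _ assms(2)])
  moreover assume "x \<in> X"
  then have "x \<in> pushed_labels N ET l C X t s \<longleftrightarrow> s \<in> tree_span N ET (nodes_of N l x) t" for s
    using assms(3) unfolding pushed_labels_def by blast
  ultimately show "nodes_of N (pushed_labels N ET l C X t) x = tree_span N ET (nodes_of N l x) t"
    unfolding nodes_of_def by blast
next
  assume "v \<in> C"
  then have "v \<in> pushed_labels N ET l C X t s \<longleftrightarrow> v \<in> l s" for s
    using assms(3) unfolding pushed_labels_def by blast
  then show "nodes_of N (pushed_labels N ET l C X t) v = nodes_of N l v"
    unfolding nodes_of_def by blast
qed

lemma vine_decomposition_pushed_labels:
  assumes vd: "vine_decomposition V E N ET l" and "X \<subseteq> V" "C \<subseteq> V - X" "t \<in> N"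
  shows "vine_decomposition (X \<union> C) (induced_edges E (X \<union> C)) N ET (pushed_labels N ET l C X t)"
proof (rule vine_decomposition_induced[OF vd])
  have tree: "tree N ET" using vd unfolding vine_decomposition_def by blast
  have nodes_N: "nodes_of N l v \<subseteq> N" for v unfolding nodes_of_def by blast
  show "X \<union> C \<subseteq> V" using assms(2,3) by blast
  show "pushed_labels N ET l C X t s \<subseteq> X \<union> C" for s unfolding pushed_labels_def by blast
  have "C \<inter> X = {}" using assms(3) by blast
  fix v assume "v \<in> X \<union> C"
  then consider "v \<in> X" | "v \<in> C" by blast
  then show "nodes_of N l v \<subseteq> nodes_of N (pushed_labels N ET l C X t) v \<and>
    connected_in N ET (nodes_of N (pushed_labels N ET l C X t) v)"
  proof cases
    case 1
    then show ?thesis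
      using nodes_of_pushed_labels(1)[OF tree assms(4) \<open>C \<inter> X = {}\<close>]
        tree_span_bounds(1)[OF tree nodes_N assms(4)] connected_tree_span[OF tree nodes_N assms(4)]
      by simp
  next
    case 2
    then show ?thesis
      using nodes_of_pushed_labels(2)[OF tree assms(4) \<open>C \<inter> X = {}\<close>] vd assms(3)
      unfolding vine_decomposition_def by auto
  qed
qed

lemma pushed_labels_root:
  assumes vd: "vine_decomposition V E N ET l" and "X \<subseteq> V" "t \<in> N" "l t \<inter> C = {}"
  shows "pushed_labels N ET l C X t t = X"
proof -
  have tree: "tree N ET" using vd unfolding vine_decomposition_def by blast
  have "t \<in> tree_span N ET (nodes_of N l x) t" if "x \<in> X" for x
  proof (rule tree_span_bounds(3)[OF tree _ assms(3)])
    show "nodes_of N l x \<subseteq> N" unfolding nodes_of_def by blast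
    show "nodes_of N l x \<noteq> {}" using vd that assms(2) unfolding vine_decomposition_def by blast
  qed
  then show ?thesis using assms(4) unfolding pushed_labels_def by auto
qed

lemma pushed_labels_leaf:
  assumes "tree N ET" "t \<in> N" "leaf N ET s" "s \<noteq> t"
  shows "pushed_labels N ET l C X t s \<subseteq> l s"
proof
  fix v assume "v \<in> pushed_labels N ET l C X t s"
  then consider "v \<in> l s" | "s \<in> tree_span N ET (nodes_of N l v) t" unfolding pushed_labels_def by blast
  then show "v \<in> l s"
  proof cases
    case 2
    have "nodes_of N l v \<subseteq> N" unfolding nodes_of_def by blast
    then have "s \<in> nodes_of N l v" using leaf_in_tree_span[OF assms(1) _ assms(2-4) 2] by blast
    then show ?thesis unfolding nodes_of_def by blast
  qed
qed

lemma card_pushed_labels_le: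
  assumes vd: "vine_decomposition V E N ET l" and "finite V" "s \<in> N" "t \<in> N"
    and P: "\<And>x. x \<in> X \<Longrightarrow> is_path V E (P x) \<and> hd (P x) = x \<and> last (P x) \<in> l t \<and> set (P x) \<inter> C = {}"
    and P_disjoint: "\<And>x y. x \<in> X \<Longrightarrow> y \<in> X \<Longrightarrow> x \<noteq> y \<Longrightarrow> set (P x) \<inter> set (P y) = {}"
  shows "card (pushed_labels N ET l C X t s) \<le> card (l s)"
  unfolding pushed_labels_def
proof (rule card_Un_le_by_disjoint_hits[where P = "\<lambda>x. set (P x)"])
  have "l s \<subseteq> V" using vd assms(3) unfolding vine_decomposition_def by blast
  then show "finite (l s)" by (rule finite_subset[OF _ assms(2)])
  show "set (P x) \<inter> (l s - C) \<noteq> {}" if x: "x \<in> {x \<in> X. s \<in> tree_span N ET (nodes_of N l x) t}" for x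
  proof -
    have xX: "x \<in> X" "s \<in> tree_span N ET (nodes_of N l x) t" using x by simp_all
    have Px: "is_path V E (P x)" "hd (P x) = x" "last (P x) \<in> l t" "set (P x) \<inter> C = {}"
      using P[OF xX(1)] by simp_all
    have "t \<in> nodes_of N l (last (P x))" using Px(3) \<open>t \<in> N\<close> unfolding nodes_of_def by simp
    from tree_span_along_path[OF vd Px(1) this]
    have "s \<in> (\<Union>v\<in>set (P x). nodes_of N l v)" using xX(2) unfolding Px(2) by (rule subsetD)
    then obtain v where "v \<in> set (P x)" "v \<in> l s" unfolding nodes_of_def by blast
    then show ?thesis using Px(4) by blast
  qed
  show "set (P x) \<inter> set (P y) = {}"
    if "x \<in> {x \<in> X. s \<in> tree_span N ET (nodes_of N l x) t}"
      "y \<in> {x \<in> X. s \<in> tree_span N ET (nodes_of N l x) t}" "x \<noteq> y" for x y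
    using P_disjoint that by blast
qed

theorem lemma2p8:
  fixes V :: "'a set" and E :: "'a set set"
    and N :: "'b set" and ET :: "'b set set" and lhat :: "'b \<Rightarrow> 'a set"
    and X C :: "'a set" and t :: 'b
  assumes "graph V E"
    and "vine_decomposition V E N ET lhat"
    and "X \<subseteq> V"
    and "component (V - X) (induced_edges E (V - X)) C"
    and "t \<in> N"
    and "lhat t \<inter> C = {}"
    and "\<forall>S. separates V E S X (lhat t) \<longrightarrow> card X \<le> card S"
  shows "\<exists>l. vine_decomposition (X \<union> C) (induced_edges E (X \<union> C)) N ET l \<and>
             l t = X \<and>
             (\<forall>s. leaf N ET s \<and> s \<noteq> t \<longrightarrow> l s \<subseteq> lhat s) \<and>
             (\<forall>s\<in>N. card (l s) \<le> card (lhat s))"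
proof -
  have "C \<subseteq> V - X" using assms(4) unfolding component_def connected_in_def by blast
  have tree: "tree N ET" using assms(2) unfolding vine_decomposition_def by blast
  have "finite V" using assms(1) unfolding graph_def by simp
  obtain P where P: "\<And>x. x \<in> X \<Longrightarrow> is_path V E (P x) \<and> hd (P x) = x \<and> last (P x) \<in> lhat t \<and>
      set (tl (P x)) \<inter> X = {}"
    and P_disjoint: "\<And>x y. x \<in> X \<Longrightarrow> y \<in> X \<Longrightarrow> x \<noteq> y \<Longrightarrow> set (P x) \<inter> set (P y) = {}"
    using menger_linkage[OF assms(1,3,7)] by metis
  have linkage: "is_path V E (P x) \<and> hd (P x) = x \<and> last (P x) \<in> lhat t \<and> set (P x) \<inter> C = {}"
    if "x \<in> X" for x
  proof -
    have "last (P x) \<notin> C" using P[OF that] assms(6) by blast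
    then have "set (P x) \<inter> C = {}"
      using path_avoids_component[OF assms(4), of "P x"] P[OF that] that by simp
    then show ?thesis using P[OF that] by simp
  qed
  let ?l = "pushed_labels N ET lhat C X t"
  have "vine_decomposition (X \<union> C) (induced_edges E (X \<union> C)) N ET ?l"
    using vine_decomposition_pushed_labels[OF assms(2,3) \<open>C \<subseteq> V - X\<close> assms(5)] .
  moreover have "?l t = X" using pushed_labels_root[OF assms(2,3,5,6)] .
  moreover have "\<forall>s. leaf N ET s \<and> s \<noteq> t \<longrightarrow> ?l s \<subseteq> lhat s"
    using pushed_labels_leaf[OF tree assms(5), where l = lhat and C = C and X = X] by simp
  moreover have "\<forall>s\<in>N. card (?l s) \<le> card (lhat s)"
    using card_pushed_labels_le[OF assms(2) \<open>finite V\<close> _ assms(5) linkage P_disjoint] by blast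
  ultimately show ?thesis by (intro exI[of _ ?l]) simp
qed

end
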